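(* Let $\alpha$ be an action of a group $\Gamma$ by homeomorphisms on an infinite Hausdorff topological space $X$. Then $\alpha$ is highly topologically transitive if and only if one of the following holds: (i) $X$ is perfect (has no isolated points) and for every $d\ge1$ the diagonal action $\alpha^d$ on $X^d$ (product topology) is topologically transitive; or (ii) the set of isolated points of $X$ is dense in $X$, and the restriction of $\alpha$ to this set is highly transitive (in particular this set is a single orbit).
   Context: For an action by homeomorphisms on a Hausdorff space $X$: it is topologically transitive if for all nonempty open $U,V\subseteq X$ there is $\gamma$ with $U\alpha(\gamma)\cap V\neq\emptyset$; for $d\ge1$ it is $d$-topologically transitive if the diagonal action on $X^{(d)}=\{(x_1,\dots,x_d)\in X^d:x_i\neq x_j\text{ for } i\ne j\}$ (topology induced from $X^d$) is topologically transitive; for infinite $X$ it is highly topologically transitive if it is $d$-topologically transitive for every $d\ge1$. An action on an infinite set is highly transitive if for every $d$, all pairwise distinct $x_1,\dots,x_d$ and all pairwise distinct $y_1,\dots,y_d$, some group element maps $x_i$ to $y_i$ for all $i$. *)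

theory Defs
  imports "HOL-Analysis.Analysis" "HOL-Algebra.Group_Action"
begin

definition action_by_homeos :: "('g, 'm) monoid_scheme \<Rightarrow> 'a topology \<Rightarrow> ('g \<Rightarrow> 'a \<Rightarrow> 'a) \<Rightarrow> bool" where
  "action_by_homeos G X \<phi> \<longleftrightarrow> group_action G (topspace X) \<phi> \<and>
     (\<forall>g\<in>carrier G. homeomorphic_map X X (\<phi> g))"

definition top_transitive :: "'b topology \<Rightarrow> 'g set \<Rightarrow> ('g \<Rightarrow> 'b \<Rightarrow> 'b) \<Rightarrow> bool" where
  "top_transitive T A act \<longleftrightarrow>
     (\<forall>U V. openin T U \<and> U \<noteq> {} \<and> openin T V \<and> V \<noteq> {} \<longrightarrow>
        (\<exists>g\<in>A. act g ` U \<inter> V \<noteq> {}))"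

text \<open>X^d: d-tuples are (extensional) functions on {..<d}, product topology.\<close>
definition power_top :: "'a topology \<Rightarrow> nat \<Rightarrow> (nat \<Rightarrow> 'a) topology" where
  "power_top X d = product_topology (\<lambda>_. X) {..<d}"

text \<open>X^(d): tuples with pairwise distinct entries, subspace topology.\<close>
definition config_top :: "'a topology \<Rightarrow> nat \<Rightarrow> (nat \<Rightarrow> 'a) topology" where
  "config_top X d = subtopology (power_top X d) {f. inj_on f {..<d}}"

definition diag_act :: "('g \<Rightarrow> 'a \<Rightarrow> 'a) \<Rightarrow> nat \<Rightarrow> 'g \<Rightarrow> (nat \<Rightarrow> 'a) \<Rightarrow> (nat \<Rightarrow> 'a)" where
  "diag_act \<phi> d g f = restrict (\<lambda>i. \<phi> g (f i)) {..<d}"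

definition d_top_transitive :: "('g, 'm) monoid_scheme \<Rightarrow> 'a topology \<Rightarrow> ('g \<Rightarrow> 'a \<Rightarrow> 'a) \<Rightarrow> nat \<Rightarrow> bool" where
  "d_top_transitive G X \<phi> d \<longleftrightarrow> top_transitive (config_top X d) (carrier G) (diag_act \<phi> d)"

definition highly_top_transitive :: "('g, 'm) monoid_scheme \<Rightarrow> 'a topology \<Rightarrow> ('g \<Rightarrow> 'a \<Rightarrow> 'a) \<Rightarrow> bool" where
  "highly_top_transitive G X \<phi> \<longleftrightarrow> (\<forall>d\<ge>1. d_top_transitive G X \<phi> d)"

definition isolated_points :: "'a topology \<Rightarrow> 'a set" where
  "isolated_points X = {x \<in> topspace X. openin X {x}}"

definition perfect_top :: "'a topology \<Rightarrow> bool" where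
  "perfect_top X \<longleftrightarrow> isolated_points X = {}"

definition highly_transitive_on :: "('g, 'm) monoid_scheme \<Rightarrow> 'a set \<Rightarrow> ('g \<Rightarrow> 'a \<Rightarrow> 'a) \<Rightarrow> bool" where
  "highly_transitive_on G Y \<phi> \<longleftrightarrow> infinite Y \<and>
     (\<forall>d. \<forall>x y :: nat \<Rightarrow> 'a. (\<forall>i<d. x i \<in> Y \<and> y i \<in> Y) \<and> inj_on x {..<d} \<and> inj_on y {..<d}
        \<longrightarrow> (\<exists>g\<in>carrier G. \<forall>i<d. \<phi> g (x i) = y i))"

end

theory Submission
  imports Defs
begin

text \<open>For Hausdorff X the configuration space X^(d) is open in X^d, so its open sets are the
  open sets of X^d consisting of injective tuples. If X is perfect, nonempty open sets are
  infinite, so every nonempty open set of X^d contains an injective tuple and d-topological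
  transitivity on X^(d) and on X^d coincide. If X has an isolated point, a tuple of distinct
  isolated points is an open point of X^(d): then 1-transitivity makes the orbit of an isolated
  point dense (homeomorphisms preserve isolated points), and d-transitivity becomes plain
  d-fold transitivity on the isolated points. Conversely, when the isolated points are dense,
  every nonempty open set of X^(d) contains a tuple of distinct isolated points, and high
  transitivity moves one such tuple onto another.\<close>

lemma PiE_singletons_eq_restrict: "PiE A (\<lambda>i. {x i}) = {restrict x A}"
  using PiE_singleton[of "restrict x A" A] by (simp cong: PiE_cong)

lemma exists_inj_on_choice:
  fixes W :: "nat \<Rightarrow> 'a set"
  assumes "\<And>i. i < d \<Longrightarrow> infinite (W i)"
  shows "\<exists>x. inj_on x {..<d} \<and> (\<forall>i<d. x i \<in> W i)"
  using assms
proof (induction d)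
  case 0
  then show ?case by simp
next
  case (Suc d)
  then obtain x where x: "inj_on x {..<d}" "\<forall>i<d. x i \<in> W i"
    by auto
  have "infinite (W d - x ` {..<d})"
    using Suc.prems by (intro Diff_infinite_finite) auto
  then obtain y where "y \<in> W d" "y \<notin> x ` {..<d}"
    by (metis Diff_iff finite.emptyI ex_in_conv)
  with x have "inj_on (x(d := y)) {..<Suc d} \<and> (\<forall>i<Suc d. (x(d := y)) i \<in> W i)"
    by (auto simp: lessThan_Suc less_Suc_eq inj_on_def)
  then show ?case by blast
qed

lemma openin_config_top_iff:
  assumes "Hausdorff_space X"
  shows "openin (config_top X d) U \<longleftrightarrow> openin (power_top X d) U \<and> U \<subseteq> {f. inj_on f {..<d}}"
proof -
  let ?T = "topspace (power_top X d)"
  let ?C = "\<Union>i<d. \<Union>j\<in>{..<d}-{i}. {f \<in> ?T. f i = f j}"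
  have "closedin (power_top X d) {f \<in> ?T. f i = f j}" if "i < d" "j < d" for i j
    unfolding power_top_def
    by (rule closedin_continuous_maps_eq[OF assms]) (auto intro: continuous_map_product_projection that)
  then have "closedin (power_top X d) ?C"
    by (intro closedin_Union) (auto intro!: closedin_Union)
  then have "openin (power_top X d) (?T - ?C)"
    by (intro openin_diff) auto
  moreover have "?T \<inter> {f. inj_on f {..<d}} = ?T - ?C"
    by (auto simp: inj_on_def)
  ultimately have "openin (power_top X d) (?T \<inter> {f. inj_on f {..<d}})"
    by simp
  moreover have "config_top X d = subtopology (power_top X d) (?T \<inter> {f. inj_on f {..<d}})"
    unfolding config_top_def by (metis subtopology_restrict)
  ultimately have "openin (config_top X d) U \<longleftrightarrow>
      openin (power_top X d) U \<and> U \<subseteq> ?T \<inter> {f. inj_on f {..<d}}"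
    by (simp add: openin_open_subtopology)
  then show ?thesis
    by (meson le_inf_iff openin_subset)
qed

lemma openin_config_topI:
  "openin (power_top X d) U \<Longrightarrow> U \<subseteq> {f. inj_on f {..<d}} \<Longrightarrow> openin (config_top X d) U"
  unfolding config_top_def openin_subtopology by blast

lemma openin_power_top_PiE:
  "(\<And>i. i < d \<Longrightarrow> openin X (W i)) \<Longrightarrow> openin (power_top X d) (PiE {..<d} W)"
  unfolding power_top_def openin_PiE_gen by auto

lemma openin_power_top_box_neighbourhood:
  assumes "openin (power_top X d) U" "u \<in> U"
  obtains W where "\<And>i. i < d \<Longrightarrow> openin X (W i) \<and> u i \<in> W i" "PiE {..<d} W \<subseteq> U"
proof -
  from assms obtain W where "\<forall>i\<in>{..<d}. openin X (W i)" "u \<in> PiE {..<d} W" "PiE {..<d} W \<subseteq> U"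
    unfolding power_top_def openin_product_topology_alt by blast
  then show ?thesis
    by (intro that[of W]) auto
qed

lemma infinite_openin_perfect:
  assumes "t1_space X" "perfect_top X" "openin X W" "W \<noteq> {}"
  shows "infinite W"
proof
  assume "finite W"
  obtain w where w: "w \<in> W"
    using assms(4) by auto
  have "closedin X (W - {w})"
    using assms(1,3) \<open>finite W\<close> openin_subset unfolding t1_space_closedin_finite by auto
  then have "openin X {w}"
    using assms(3) openin_diff[of X W "W - {w}"] w by (simp add: Diff_Diff_Int)
  then show False
    using assms(2) w openin_subset[OF assms(3)] unfolding perfect_top_def isolated_points_def by auto
qed

lemma perfect_power_top_open_has_inj_tuple:
  assumes "t1_space X" "perfect_top X" "openin (power_top X d) U" "U \<noteq> {}"
  shows "\<exists>f\<in>U. inj_on f {..<d}"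
proof -
  obtain u where "u \<in> U"
    using assms(4) by auto
  then obtain W where W: "\<And>i. i < d \<Longrightarrow> openin X (W i) \<and> u i \<in> W i" "PiE {..<d} W \<subseteq> U"
    using openin_power_top_box_neighbourhood[OF assms(3)] by blast
  have "\<And>i. i < d \<Longrightarrow> infinite (W i)"
    using W(1) infinite_openin_perfect[OF assms(1,2)] by blast
  then obtain x where "inj_on x {..<d}" "\<forall>i<d. x i \<in> W i"
    using exists_inj_on_choice by blast
  then have "restrict x {..<d} \<in> U" "inj_on (restrict x {..<d}) {..<d}"
    using W(2) by (auto simp: inj_on_def restrict_PiE_iff subset_iff)
  then show ?thesis by blast
qed

lemma d_top_transitive_iff_power_top_transitive:
  assumes "Hausdorff_space X" "perfect_top X"
  shows "d_top_transitive G X \<phi> d \<longleftrightarrow> top_transitive (power_top X d) (carrier G) (diag_act \<phi> d)"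
proof
  assume trans: "d_top_transitive G X \<phi> d"
  show "top_transitive (power_top X d) (carrier G) (diag_act \<phi> d)"
    unfolding top_transitive_def
  proof (intro allI impI)
    fix U V
    assume UV: "openin (power_top X d) U \<and> U \<noteq> {} \<and> openin (power_top X d) V \<and> V \<noteq> {}"
    let ?Inj = "{f. inj_on f {..<d}}"
    have "openin (config_top X d) (U \<inter> ?Inj)" "openin (config_top X d) (V \<inter> ?Inj)"
      using UV unfolding config_top_def openin_subtopology by blast+
    moreover have "U \<inter> ?Inj \<noteq> {}" "V \<inter> ?Inj \<noteq> {}"
      using UV perfect_power_top_open_has_inj_tuple[OF Hausdorff_imp_t1_space[OF assms(1)] assms(2)]
      by blast+
    ultimately obtain g where "g \<in> carrier G" "diag_act \<phi> d g ` (U \<inter> ?Inj) \<inter> (V \<inter> ?Inj) \<noteq> {}"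
      using trans unfolding d_top_transitive_def top_transitive_def by blast
    then show "\<exists>g\<in>carrier G. diag_act \<phi> d g ` U \<inter> V \<noteq> {}"
      by blast
  qed
next
  assume "top_transitive (power_top X d) (carrier G) (diag_act \<phi> d)"
  then show "d_top_transitive G X \<phi> d"
    unfolding d_top_transitive_def top_transitive_def openin_config_top_iff[OF assms(1)] by blast
qed

lemma isolated_points_homeomorphic_map:
  assumes "homeomorphic_map X Y f" "x \<in> isolated_points X"
  shows "f x \<in> isolated_points Y"
proof -
  have "openin Y (f ` {x})"
    using assms homeomorphic_imp_open_map unfolding isolated_points_def open_map_def by blast
  moreover have "f x \<in> topspace Y"
    using assms homeomorphic_imp_continuous_map unfolding isolated_points_def continuous_map_def
    by fastforce
  ultimately show ?thesis
    unfolding isolated_points_def by auto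
qed

lemma openin_config_top_isolated_singletons:
  assumes "\<And>i. i < d \<Longrightarrow> x i \<in> isolated_points X" "inj_on x {..<d}"
  shows "openin (config_top X d) {restrict x {..<d}}"
proof (rule openin_config_topI)
  show "openin (power_top X d) {restrict x {..<d}}"
    using openin_power_top_PiE[of d X "\<lambda>i. {x i}"] assms(1)
    by (simp add: PiE_singletons_eq_restrict isolated_points_def)
  show "{restrict x {..<d}} \<subseteq> {f. inj_on f {..<d}}"
    using assms(2) by (simp add: inj_on_def)
qed

lemma d_top_transitive_isolated_tuple:
  assumes "d_top_transitive G X \<phi> d" "\<And>i. i < d \<Longrightarrow> x i \<in> isolated_points X" "inj_on x {..<d}"
    "openin (config_top X d) V" "V \<noteq> {}"
  shows "\<exists>g\<in>carrier G. diag_act \<phi> d g (restrict x {..<d}) \<in> V"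
  using assms openin_config_top_isolated_singletons[OF assms(2,3)]
  unfolding d_top_transitive_def top_transitive_def by blast

lemma d_top_transitive_moves_isolated_tuples:
  assumes "d_top_transitive G X \<phi> d"
    "\<And>i. i < d \<Longrightarrow> x i \<in> isolated_points X" "inj_on x {..<d}"
    "\<And>i. i < d \<Longrightarrow> y i \<in> isolated_points X" "inj_on y {..<d}"
  shows "\<exists>g\<in>carrier G. \<forall>i<d. \<phi> g (x i) = y i"
proof -
  obtain g where g: "g \<in> carrier G" "diag_act \<phi> d g (restrict x {..<d}) = restrict y {..<d}"
    using d_top_transitive_isolated_tuple[OF assms(1-3) openin_config_top_isolated_singletons[OF assms(4,5)]]
    by blast
  have "\<phi> g (x i) = y i" if "i < d" for i
    using fun_cong[OF g(2), of i] that by (simp add: diag_act_def)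
  with g(1) show ?thesis
    by blast
qed

lemma dense_isolated_points_if_top_transitive:
  assumes "action_by_homeos G X \<phi>" "d_top_transitive G X \<phi> 1" "x0 \<in> isolated_points X"
  shows "X closure_of isolated_points X = topspace X"
proof -
  have meets: "\<exists>y\<in>isolated_points X. y \<in> T" if "openin X T" "T \<noteq> {}" for T
  proof -
    have opn: "openin (config_top X 1) (PiE {..<1} (\<lambda>_. T))"
      by (intro openin_config_topI openin_power_top_PiE that(1)) (simp add: lessThan_Suc)
    have ne: "PiE {..<1} (\<lambda>_. T) \<noteq> {}"
      using that(2) by (simp add: PiE_eq_empty_iff)
    have inj: "inj_on (\<lambda>_::nat. x0) {..<1}"
      by (simp add: lessThan_Suc)
    obtain g where g: "g \<in> carrier G"
      "diag_act \<phi> 1 g (restrict (\<lambda>_. x0) {..<1}) \<in> PiE {..<1} (\<lambda>_. T)"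
      using d_top_transitive_isolated_tuple[OF assms(2) _ inj opn ne] assms(3) by blast
    from g(2) have "diag_act \<phi> 1 g (restrict (\<lambda>_. x0) {..<1}) 0 \<in> T"
      by (simp add: PiE_iff)
    then have "\<phi> g x0 \<in> T"
      by (simp add: diag_act_def)
    moreover have "homeomorphic_map X X (\<phi> g)"
      using assms(1) g(1) by (simp add: action_by_homeos_def)
    then have "\<phi> g x0 \<in> isolated_points X"
      by (rule isolated_points_homeomorphic_map[OF _ assms(3)])
    ultimately show ?thesis
      by blast
  qed
  have "topspace X \<subseteq> X closure_of isolated_points X"
  proof
    fix x
    assume "x \<in> topspace X"
    then show "x \<in> X closure_of isolated_points X"
      unfolding in_closure_of using meets by blast
  qed
  then show ?thesis
    by (rule subset_antisym[OF closure_of_subset_topspace])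
qed

lemma infinite_isolated_points_if_dense:
  assumes "t1_space X" "infinite (topspace X)" "X closure_of isolated_points X = topspace X"
  shows "infinite (isolated_points X)"
proof
  assume "finite (isolated_points X)"
  then have "closedin X (isolated_points X)"
    using assms(1) unfolding t1_space_closedin_finite by (auto simp: isolated_points_def)
  then show False
    using assms(2,3) \<open>finite (isolated_points X)\<close> closure_of_closedin by metis
qed

lemma highly_transitive_on_isolated_points:
  fixes X :: "'a topology"
  assumes "group G" "highly_top_transitive G X \<phi>" "infinite (isolated_points X)"
  shows "highly_transitive_on G (isolated_points X) \<phi>"
  unfolding highly_transitive_on_def
proof (intro conjI assms(3) allI impI)
  fix d and x y :: "nat \<Rightarrow> 'a"
  assume xy: "(\<forall>i<d. x i \<in> isolated_points X \<and> y i \<in> isolated_points X) \<and>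
    inj_on x {..<d} \<and> inj_on y {..<d}"
  show "\<exists>g\<in>carrier G. \<forall>i<d. \<phi> g (x i) = y i"
  proof (cases "d = 0")
    case True
    then show ?thesis
      using group.is_monoid[OF assms(1)] monoid.one_closed by blast
  next
    case False
    then have "d_top_transitive G X \<phi> d"
      using assms(2) unfolding highly_top_transitive_def by simp
    then show ?thesis
      using xy d_top_transitive_moves_isolated_tuples by blast
  qed
qed

lemma power_top_open_has_isolated_tuple:
  assumes "X closure_of isolated_points X = topspace X" "openin (power_top X d) U" "U \<noteq> {}"
  shows "\<exists>x. (\<forall>i<d. x i \<in> isolated_points X) \<and> restrict x {..<d} \<in> U"
proof -
  obtain u where "u \<in> U"
    using assms(3) by auto
  then obtain W where W: "\<And>i. i < d \<Longrightarrow> openin X (W i) \<and> u i \<in> W i" "PiE {..<d} W \<subseteq> U"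
    using openin_power_top_box_neighbourhood[OF assms(2)] by blast
  have "\<exists>z\<in>isolated_points X. z \<in> W i" if "i < d" for i
    using W(1)[OF that] assms(1) openin_subset unfolding closure_of_def by blast
  then obtain x where "\<forall>i<d. x i \<in> isolated_points X \<and> x i \<in> W i"
    by metis
  then show ?thesis
    using W(2) by (auto simp: restrict_PiE_iff subset_iff)
qed

lemma d_top_transitive_if_dense_highly_transitive:
  assumes "Hausdorff_space X" "X closure_of isolated_points X = topspace X"
    "highly_transitive_on G (isolated_points X) \<phi>"
  shows "d_top_transitive G X \<phi> d"
  unfolding d_top_transitive_def top_transitive_def openin_config_top_iff[OF assms(1)]
proof (intro allI impI)
  fix U V
  assume "(openin (power_top X d) U \<and> U \<subseteq> {f. inj_on f {..<d}}) \<and> U \<noteq> {} \<and>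
    (openin (power_top X d) V \<and> V \<subseteq> {f. inj_on f {..<d}}) \<and> V \<noteq> {}"
  then have U: "openin (power_top X d) U" "U \<subseteq> {f. inj_on f {..<d}}" "U \<noteq> {}"
    and V: "openin (power_top X d) V" "V \<subseteq> {f. inj_on f {..<d}}" "V \<noteq> {}"
    by simp_all
  obtain x where x: "\<forall>i<d. x i \<in> isolated_points X" "restrict x {..<d} \<in> U"
    using power_top_open_has_isolated_tuple[OF assms(2) U(1,3)] by blast
  obtain y where y: "\<forall>i<d. y i \<in> isolated_points X" "restrict y {..<d} \<in> V"
    using power_top_open_has_isolated_tuple[OF assms(2) V(1,3)] by blast
  have "inj_on (restrict x {..<d}) {..<d}" "inj_on (restrict y {..<d}) {..<d}"
    using subsetD[OF U(2) x(2)] subsetD[OF V(2) y(2)] by simp_all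
  then have "inj_on x {..<d}" "inj_on y {..<d}"
    unfolding inj_on_def by simp_all
  moreover have "\<And>x y. (\<forall>i<d. x i \<in> isolated_points X \<and> y i \<in> isolated_points X) \<and>
      inj_on x {..<d} \<and> inj_on y {..<d} \<Longrightarrow> \<exists>g\<in>carrier G. \<forall>i<d. \<phi> g (x i) = y i"
    using assms(3) unfolding highly_transitive_on_def by blast
  ultimately obtain g where g: "g \<in> carrier G" "\<forall>i<d. \<phi> g (x i) = y i"
    using x(1) y(1) by blast
  have "diag_act \<phi> d g (restrict x {..<d}) = restrict y {..<d}"
    unfolding diag_act_def by (intro restrict_ext) (simp add: g(2))
  then have "restrict y {..<d} \<in> diag_act \<phi> d g ` U \<inter> V"
    using x(2) y(2) by (metis IntI image_eqI)
  with g(1) show "\<exists>g\<in>carrier G. diag_act \<phi> d g ` U \<inter> V \<noteq> {}"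
    by blast
qed

theorem mainTheorem5:
  fixes G :: "('g, 'm) monoid_scheme" and X :: "'a topology" and \<phi> :: "'g \<Rightarrow> 'a \<Rightarrow> 'a"
  assumes "action_by_homeos G X \<phi>"
    and "Hausdorff_space X"
    and "infinite (topspace X)"
  shows "highly_top_transitive G X \<phi> \<longleftrightarrow>
    ((perfect_top X \<and> (\<forall>d\<ge>1. top_transitive (power_top X d) (carrier G) (diag_act \<phi> d)))
     \<or> (X closure_of (isolated_points X) = topspace X \<and>
        highly_transitive_on G (isolated_points X) \<phi>))"
proof (cases "perfect_top X")
  case True
  then have "\<not> highly_transitive_on G (isolated_points X) \<phi>"
    by (simp add: perfect_top_def highly_transitive_on_def)
  with True show ?thesis
    unfolding highly_top_transitive_def d_top_transitive_iff_power_top_transitive[OF assms(2) True]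
    by blast
next
  case False
  then obtain x0 where x0: "x0 \<in> isolated_points X"
    unfolding perfect_top_def by blast
  have "group G"
    using assms(1) group_hom.axioms(1) group_action.group_hom
    unfolding action_by_homeos_def by blast
  have "highly_top_transitive G X \<phi> \<longleftrightarrow>
    X closure_of isolated_points X = topspace X \<and> highly_transitive_on G (isolated_points X) \<phi>"
  proof
    assume trans: "highly_top_transitive G X \<phi>"
    then have dense: "X closure_of isolated_points X = topspace X"
      using dense_isolated_points_if_top_transitive[OF assms(1) _ x0]
      unfolding highly_top_transitive_def by blast
    then have "infinite (isolated_points X)"
      using infinite_isolated_points_if_dense Hausdorff_imp_t1_space assms(2,3) by blast
    with dense show "X closure_of isolated_points X = topspace X \<and>
        highly_transitive_on G (isolated_points X) \<phi>"
      using highly_transitive_on_isolated_points[OF \<open>group G\<close> trans] by blast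
  next
    assume "X closure_of isolated_points X = topspace X \<and> highly_transitive_on G (isolated_points X) \<phi>"
    then show "highly_top_transitive G X \<phi>"
      using d_top_transitive_if_dense_highly_transitive[OF assms(2)]
      unfolding highly_top_transitive_def by blast
  qed
  with False show ?thesis
    by blast
qed

end
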